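(* Let $q$ be a prime power, $0<r\leq m$, $g_1,\dots,g_r\in\mathbb{F}_{q^m}$, and let $\mathcal{A}\subseteq\langle g_1,\dots,g_r\rangle_{\mathbb{F}_q}$ be a subset containing an $\mathbb{F}_q$-linear subspace of dimension at least $d$, where $d\leq r$. Let $t\ge 1$ and let $(e_1,\dots,e_t)$ be drawn uniformly at random among $t$-tuples of $\mathbb{F}_q$-linearly independent elements of $\mathbb{F}_{q^m}$. Then the probability that there exists $\mathbf{a}=(a_1,\dots,a_t)\in\mathcal{A}^t\setminus\{\mathbf{0}\}$ with $\sum_{j=1}^t a_je_j=0$ is at most \[ \frac{q^{tr+1}-(q^d-1)(q^t-1)}{q^{m+1}-q^t}. \]
   Context: $\langle g_1,\dots,g_r\rangle_{\mathbb{F}_q}$ denotes the $\mathbb{F}_q$-linear span of $g_1,\dots,g_r$ in $\mathbb{F}_{q^m}$. *)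

theory Defs
  imports Complex_Main "HOL-Computational_Algebra.Primes"
begin

text \<open>The big field F_{q^m} is a finite type 'a of class field; the base field F_q is
  a subfield K of it (a subset closed under the field operations).\<close>

definition is_subfield :: "'a::field set \<Rightarrow> bool" where
  "is_subfield K \<longleftrightarrow> 0 \<in> K \<and> 1 \<in> K \<and>
     (\<forall>x\<in>K. \<forall>y\<in>K. x + y \<in> K \<and> x * y \<in> K) \<and>
     (\<forall>x\<in>K. - x \<in> K \<and> inverse x \<in> K)"

definition lin_comb :: "'a::field list \<Rightarrow> 'a list \<Rightarrow> 'a" where
  "lin_comb cs vs = (\<Sum>i<length vs. cs ! i * vs ! i)"

definition K_span :: "'a::field set \<Rightarrow> 'a list \<Rightarrow> 'a set" where
  "K_span K gs = {lin_comb cs gs | cs. length cs = length gs \<and> set cs \<subseteq> K}"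

definition K_lin_indep :: "'a::field set \<Rightarrow> 'a list \<Rightarrow> bool" where
  "K_lin_indep K vs \<longleftrightarrow>
     (\<forall>cs. length cs = length vs \<and> set cs \<subseteq> K \<and> lin_comb cs vs = 0 \<longrightarrow> set cs \<subseteq> {0})"

definition K_subspace :: "'a::field set \<Rightarrow> 'a set \<Rightarrow> bool" where
  "K_subspace K V \<longleftrightarrow> 0 \<in> V \<and> (\<forall>x\<in>V. \<forall>y\<in>V. x + y \<in> V) \<and> (\<forall>c\<in>K. \<forall>x\<in>V. c * x \<in> V)"

definition K_dim_ge :: "'a::field set \<Rightarrow> 'a set \<Rightarrow> nat \<Rightarrow> bool" where
  "K_dim_ge K V d \<longleftrightarrow> (\<exists>vs. length vs = d \<and> set vs \<subseteq> V \<and> K_lin_indep K vs)"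

end

theory Submission
  imports Defs
begin

text \<open>
  Union bound over the coefficient tuples \<open>a\<close>. For fixed \<open>a \<noteq> 0\<close>, deleting a coordinate
  \<open>j\<close> with \<open>a ! j \<noteq> 0\<close> maps the independent \<open>t\<close>-tuples \<open>e\<close> with \<open>lin_comb a e = 0\<close>
  injectively into the independent \<open>(t - 1)\<close>-tuples, and these make up a fraction
  \<open>1 / (q ^ m - q ^ (t - 1))\<close> of the independent \<open>t\<close>-tuples. Tuples
  \<open>a = w (1, c\<^sub>2, ..., c\<^sub>t)\<close> with \<open>w \<noteq> 0\<close> in the \<open>d\<close>-dimensional subspace and all
  \<open>c\<^sub>i \<in> K\<close> never annihilate an independent tuple, so the union runs over at most
  \<open>q ^ (t r) - 1 - (q ^ d - 1) q ^ (t - 1)\<close> tuples; multiplying numerator and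
  denominator by \<open>q\<close> gives the stated bound.
\<close>

lemma lin_comb_Nil [simp]: "lin_comb cs [] = 0"
  by (simp add: lin_comb_def)

lemma lin_comb_Cons [simp]: "lin_comb (c # cs) (v # vs) = c * v + lin_comb cs vs"
  unfolding lin_comb_def length_Cons sum.lessThan_Suc_shift by simp

lemma lin_comb_append:
  "length cs = length vs \<Longrightarrow> lin_comb (cs @ cs') (vs @ vs') = lin_comb cs vs + lin_comb cs' vs'"
  by (induction cs vs rule: list_induct2) (simp_all add: add.assoc)

lemma lin_comb_scale:
  "length cs = length vs \<Longrightarrow> lin_comb (map ((*) w) cs) vs = w * lin_comb cs vs"
  by (simp add: lin_comb_def sum_distrib_left mult.assoc)

lemma lin_comb_diff:
  "length cs = length vs \<Longrightarrow> length cs' = length vs \<Longrightarrow>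
   lin_comb cs vs - lin_comb cs' vs = lin_comb (map2 (-) cs cs') vs"
  by (simp add: lin_comb_def sum_subtractf[symmetric] left_diff_distrib)

lemma lin_comb_replicate_0 [simp]: "lin_comb (replicate (length vs) 0) vs = 0"
  by (simp add: lin_comb_def)

lemma subfield_diff: "is_subfield K \<Longrightarrow> x \<in> K \<Longrightarrow> y \<in> K \<Longrightarrow> x - y \<in> K"
  unfolding is_subfield_def by (metis diff_conv_add_uminus)

lemma card_subfield_ge_2: "is_subfield K \<Longrightarrow> finite K \<Longrightarrow> 2 \<le> card K"
proof -
  assume "is_subfield K" "finite K"
  then have "{0, 1} \<subseteq> K" unfolding is_subfield_def by blast
  then show ?thesis using \<open>finite K\<close> card_mono[of K "{0, 1}"] by simp
qed

lemma zero_in_K_span: "is_subfield K \<Longrightarrow> 0 \<in> K_span K gs"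
  unfolding K_span_def is_subfield_def
  by (auto intro!: exI[of _ "replicate (length gs) 0"])

lemma lin_comb_in_subspace:
  assumes "K_subspace K V" "set vs \<subseteq> V" "set cs \<subseteq> K" "length cs = length vs"
  shows "lin_comb cs vs \<in> V"
  using assms(4,2,3)
  by (induction cs vs rule: list_induct2) (use assms(1) in \<open>auto simp: K_subspace_def\<close>)

lemma K_span_subset_subspace: "K_subspace K V \<Longrightarrow> set vs \<subseteq> V \<Longrightarrow> K_span K vs \<subseteq> V"
  unfolding K_span_def using lin_comb_in_subspace by blast

lemma K_span_eq_image: "K_span K gs = (\<lambda>cs. lin_comb cs gs) ` {cs. set cs \<subseteq> K \<and> length cs = length gs}"
  unfolding K_span_def by auto

lemma card_K_span_le:
  assumes "finite K"
  shows "card (K_span K gs) \<le> card K ^ length gs"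
proof -
  have "card (K_span K gs) \<le> card {cs. set cs \<subseteq> K \<and> length cs = length gs}"
    unfolding K_span_eq_image using assms by (intro card_image_le finite_lists_length_eq)
  then show ?thesis
    using assms by (simp add: card_lists_length_eq)
qed

lemma K_lin_indepD:
  "K_lin_indep K vs \<Longrightarrow> length cs = length vs \<Longrightarrow> set cs \<subseteq> K \<Longrightarrow> lin_comb cs vs = 0 \<Longrightarrow>
   cs = replicate (length vs) 0"
  unfolding K_lin_indep_def by (auto intro!: replicate_eqI)

lemma card_K_span_indep:
  assumes "finite K" "is_subfield K" "K_lin_indep K vs"
  shows "card (K_span K vs) = card K ^ length vs"
proof -
  let ?L = "{cs. set cs \<subseteq> K \<and> length cs = length vs}"
  have "inj_on (\<lambda>cs. lin_comb cs vs) ?L"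
  proof (rule inj_onI)
    fix cs cs' assume cs: "cs \<in> ?L" "cs' \<in> ?L" and eq: "lin_comb cs vs = lin_comb cs' vs"
    have "set (map2 (-) cs cs') \<subseteq> K"
      using cs by (fastforce simp: set_zip intro!: subfield_diff[OF assms(2)] intro: nth_mem)
    moreover have "lin_comb (map2 (-) cs cs') vs = 0"
      using cs eq lin_comb_diff[of cs vs cs'] by simp
    ultimately have diff: "map2 (-) cs cs' = replicate (length vs) 0"
      using cs K_lin_indepD[OF assms(3)] by simp
    show "cs = cs'"
    proof (rule nth_equalityI)
      fix i assume "i < length cs"
      then have "map2 (-) cs cs' ! i = 0" using diff cs by simp
      then show "cs ! i = cs' ! i" using \<open>i < length cs\<close> cs by simp
    qed (use cs in simp)
  qed
  then show ?thesis
    unfolding K_span_eq_image by (simp add: card_image card_lists_length_eq[OF assms(1)])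
qed

lemma K_lin_indep_Cons:
  assumes K: "is_subfield K"
  shows "K_lin_indep K (e # ws) \<longleftrightarrow> K_lin_indep K ws \<and> e \<notin> K_span K ws"
proof
  assume indep: "K_lin_indep K (e # ws)"
  have "K_lin_indep K ws"
    unfolding K_lin_indep_def
  proof (intro allI impI)
    fix cs assume "length cs = length ws \<and> set cs \<subseteq> K \<and> lin_comb cs ws = 0"
    then show "set cs \<subseteq> {0}"
      using indep[unfolded K_lin_indep_def, rule_format, of "0 # cs"] K
      by (simp add: is_subfield_def)
  qed
  moreover have "e \<notin> K_span K ws"
  proof
    assume "e \<in> K_span K ws"
    then obtain cs where "length cs = length ws" "set cs \<subseteq> K" "lin_comb cs ws = e"
      unfolding K_span_def by auto
    moreover have "- 1 \<in> K" using K unfolding is_subfield_def by blast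
    ultimately show False
      using indep[unfolded K_lin_indep_def, rule_format, of "- 1 # cs"] by simp
  qed
  ultimately show "K_lin_indep K ws \<and> e \<notin> K_span K ws" ..
next
  assume ws: "K_lin_indep K ws \<and> e \<notin> K_span K ws"
  show "K_lin_indep K (e # ws)"
    unfolding K_lin_indep_def
  proof (intro allI impI)
    fix cs assume "length cs = length (e # ws) \<and> set cs \<subseteq> K \<and> lin_comb cs (e # ws) = 0"
    then obtain c cs' where cs: "cs = c # cs'" "length cs' = length ws" "c \<in> K" "set cs' \<subseteq> K"
      and zero: "c * e + lin_comb cs' ws = 0"
      by (cases cs) auto
    have "c = 0"
    proof (rule ccontr)
      assume "c \<noteq> 0"
      moreover have "lin_comb cs' ws = - (c * e)"
        using zero by (simp add: eq_neg_iff_add_eq_0 add.commute)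
      ultimately have "e = lin_comb (map ((*) (- inverse c)) cs') ws"
        using cs(2) by (simp add: lin_comb_scale)
      moreover have "set (map ((*) (- inverse c)) cs') \<subseteq> K"
        using cs K unfolding is_subfield_def by auto
      ultimately have "e \<in> K_span K ws"
        using cs(2) unfolding K_span_def by (intro CollectI exI[of _ "map ((*) (- inverse c)) cs'"]) simp
      with ws show False by simp
    qed
    then show "set cs \<subseteq> {0}"
      using ws zero cs unfolding K_lin_indep_def by simp
  qed
qed

definition delete_nth :: "nat \<Rightarrow> 'a list \<Rightarrow> 'a list" where
  "delete_nth j xs = take j xs @ drop (Suc j) xs"

lemma length_delete_nth [simp]: "j < length xs \<Longrightarrow> length (delete_nth j xs) = length xs - 1"
  by (simp add: delete_nth_def)

lemma lin_comb_delete_nth: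
  assumes "length cs = length vs" "j < length vs"
  shows "lin_comb cs vs = cs ! j * vs ! j + lin_comb (delete_nth j cs) (delete_nth j vs)"
proof -
  have "lin_comb cs vs =
      lin_comb (take j cs @ cs ! j # drop (Suc j) cs) (take j vs @ vs ! j # drop (Suc j) vs)"
    using assms by (simp flip: id_take_nth_drop)
  then show ?thesis
    using assms by (simp add: lin_comb_append delete_nth_def)
qed

lemma K_lin_indep_delete_nth:
  assumes K: "is_subfield K" and indep: "K_lin_indep K vs" and j: "j < length vs"
  shows "K_lin_indep K (delete_nth j vs)"
  unfolding K_lin_indep_def
proof (intro allI impI)
  fix cs assume cs: "length cs = length (delete_nth j vs) \<and> set cs \<subseteq> K \<and> lin_comb cs (delete_nth j vs) = 0"
  define cs' where "cs' = take j cs @ 0 # drop j cs"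
  have "j \<le> length cs" using cs j by simp
  then have cs': "length cs' = length vs" "cs' ! j = 0" "delete_nth j cs' = cs"
    using cs j by (simp_all add: cs'_def delete_nth_def nth_append)
  have "set cs' \<subseteq> K"
    using cs K unfolding cs'_def is_subfield_def by (auto dest: in_set_takeD in_set_dropD)
  moreover have "lin_comb cs' vs = 0"
    using lin_comb_delete_nth[OF cs'(1) j] cs cs' by simp
  ultimately have "set cs' \<subseteq> {0}"
    using indep cs'(1) unfolding K_lin_indep_def by blast
  then show "set cs \<subseteq> {0}"
    unfolding cs'_def by (metis Un_subset_iff append_take_drop_id insert_subset list.set(2) set_append)
qed

lemma delete_nth_eqD:
  assumes "length xs = length ys" "j < length xs" "xs ! j = ys ! j" "delete_nth j xs = delete_nth j ys"
  shows "xs = ys"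
proof -
  have "take j xs = take j ys" "drop (Suc j) xs = drop (Suc j) ys"
    using assms(1,2,4) by (simp_all add: delete_nth_def)
  then show ?thesis
    using assms(1-3) id_take_nth_drop by metis
qed

definition indep_tuples :: "'a::field set \<Rightarrow> nat \<Rightarrow> 'a list set" where
  "indep_tuples K n = {es. length es = n \<and> K_lin_indep K es}"

lemma finite_indep_tuples: "finite (indep_tuples (K :: 'a::{field,finite} set) n)"
  by (rule finite_subset[OF _ finite_lists_length_eq[of UNIV n]]) (auto simp: indep_tuples_def)

lemma indep_tuples_Suc:
  assumes "is_subfield K"
  shows "indep_tuples K (Suc n) = (\<lambda>(ws, e). e # ws) ` (SIGMA ws:indep_tuples K n. - K_span K ws)"
  unfolding indep_tuples_def
  by (force simp: K_lin_indep_Cons[OF assms] length_Suc_conv)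

lemma card_indep_tuples_Suc:
  fixes K :: "'a::{field,finite} set"
  assumes K: "is_subfield K" and F: "card (UNIV :: 'a set) = card K ^ m"
  shows "card (indep_tuples K (Suc n)) = card (indep_tuples K n) * (card K ^ m - card K ^ n)"
proof -
  have "inj_on (\<lambda>(ws, e). e # ws) (SIGMA ws:indep_tuples K n. - K_span K ws)"
    by (auto simp: inj_on_def)
  then have "card (indep_tuples K (Suc n)) = (\<Sum>ws\<in>indep_tuples K n. card (- K_span K ws))"
    by (simp add: indep_tuples_Suc[OF K] card_image finite_indep_tuples)
  also have "\<dots> = (\<Sum>ws\<in>indep_tuples K n. card K ^ m - card K ^ n)"
    using card_K_span_indep[OF finite K] F
    by (intro sum.cong) (auto simp: indep_tuples_def Compl_eq_Diff_UNIV card_Diff_subset)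
  finally show ?thesis by simp
qed

lemma card_indep_solutions_le:
  fixes K :: "'a::{field,finite} set"
  assumes K: "is_subfield K" and a: "length a = t" "a \<noteq> replicate t 0"
  shows "card {es \<in> indep_tuples K t. lin_comb a es = 0} \<le> card (indep_tuples K (t - 1))"
proof -
  obtain j where j: "j < t" "a ! j \<noteq> 0"
    using a by (auto simp: list_eq_iff_nth_eq)
  have "inj_on (delete_nth j) {es \<in> indep_tuples K t. lin_comb a es = 0}"
  proof (rule inj_onI)
    fix es es' assume es: "es \<in> {es \<in> indep_tuples K t. lin_comb a es = 0}"
      and es': "es' \<in> {es \<in> indep_tuples K t. lin_comb a es = 0}"
      and eq: "delete_nth j es = delete_nth j es'"
    have "a ! j * es ! j + lin_comb (delete_nth j a) (delete_nth j es) =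
        a ! j * es' ! j + lin_comb (delete_nth j a) (delete_nth j es')"
      using es es' j a lin_comb_delete_nth[of a es j] lin_comb_delete_nth[of a es' j]
      by (simp add: indep_tuples_def)
    then have "es ! j = es' ! j"
      using eq j by simp
    then show "es = es'"
      using delete_nth_eqD[of es es' j] es es' eq j by (simp add: indep_tuples_def)
  qed
  moreover have "delete_nth j ` {es \<in> indep_tuples K t. lin_comb a es = 0} \<subseteq> indep_tuples K (t - 1)"
    using K_lin_indep_delete_nth[OF K] j by (auto simp: indep_tuples_def)
  ultimately show ?thesis
    by (rule card_inj_on_le[OF _ _ finite_indep_tuples])
qed

lemma card_annihilated_indep_tuples_le:
  fixes K :: "'a::{field,finite} set"
  assumes K: "is_subfield K" and B: "\<And>a. a \<in> B \<Longrightarrow> length a = t \<and> a \<noteq> replicate t 0"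
  shows "card {es \<in> indep_tuples K t. \<exists>a\<in>B. lin_comb a es = 0} \<le> card B * card (indep_tuples K (t - 1))"
proof -
  have "finite B"
    using B by (intro finite_subset[OF _ finite_lists_length_eq[of UNIV t]]) auto
  have "card {es \<in> indep_tuples K t. \<exists>a\<in>B. lin_comb a es = 0} =
      card (\<Union>a\<in>B. {es \<in> indep_tuples K t. lin_comb a es = 0})"
    by (rule arg_cong[where f = card]) blast
  also have "\<dots> \<le> (\<Sum>a\<in>B. card {es \<in> indep_tuples K t. lin_comb a es = 0})"
    using \<open>finite B\<close> by (rule card_UN_le)
  also have "\<dots> \<le> (\<Sum>a\<in>B. card (indep_tuples K (t - 1)))"
    using B card_indep_solutions_le[OF K] by (intro sum_mono) blast
  finally show ?thesis by simp
qed

lemma ratio_annihilated_indep_tuples_le: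
  fixes K :: "'a::{field,finite} set"
  assumes K: "is_subfield K" and F: "card (UNIV :: 'a set) = card K ^ m" and "n < m"
    and B: "\<And>a. a \<in> B \<Longrightarrow> length a = Suc n \<and> a \<noteq> replicate (Suc n) 0"
  shows "real (card {es \<in> indep_tuples K (Suc n). \<exists>a\<in>B. lin_comb a es = 0}) / real (card (indep_tuples K (Suc n)))
    \<le> real (card B) / (real (card K) ^ m - real (card K) ^ n)"
proof -
  define N where "N = real (card (indep_tuples K n))"
  define D where "D = real (card K) ^ m - real (card K) ^ n"
  have "card K ^ n < card K ^ m"
    using card_subfield_ge_2[OF K finite] \<open>n < m\<close> by (intro power_strict_increasing) auto
  then have E: "real (card (indep_tuples K (Suc n))) = N * D" and "0 < D"
    unfolding N_def D_def card_indep_tuples_Suc[OF K F]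
    by (simp_all flip: of_nat_power)
  have P: "real (card {es \<in> indep_tuples K (Suc n). \<exists>a\<in>B. lin_comb a es = 0}) \<le> real (card B) * N"
    unfolding N_def using card_annihilated_indep_tuples_le[OF K B] by (simp flip: of_nat_mult)
  show ?thesis
  proof (cases "N = 0")
    case True
    with P \<open>0 < D\<close> show ?thesis by (simp add: E flip: D_def)
  next
    case False
    then have "0 < N" by (simp add: N_def)
    have "real (card {es \<in> indep_tuples K (Suc n). \<exists>a\<in>B. lin_comb a es = 0}) / (N * D)
        \<le> real (card B) * N / (N * D)"
      using P \<open>0 < N\<close> \<open>0 < D\<close> by (intro divide_right_mono) simp_all
    with \<open>0 < N\<close> show ?thesis by (simp add: E D_def)
  qed
qed

text \<open>Fixing the first coordinate to \<open>1\<close> makes \<open>(w, c) \<mapsto> w (1 # c)\<close> injective.\<close>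

definition scaled_monic_tuples :: "'a::field set \<Rightarrow> 'a set \<Rightarrow> nat \<Rightarrow> 'a list set" where
  "scaled_monic_tuples K W n =
    (\<lambda>(w, cs). map ((*) w) (1 # cs)) ` ((W - {0}) \<times> {cs. set cs \<subseteq> K \<and> length cs = n})"

lemma card_scaled_monic_tuples:
  assumes "finite K"
  shows "card (scaled_monic_tuples K W n) = card (W - {0}) * card K ^ n"
proof -
  have "inj_on (\<lambda>(w, cs). map ((*) w) (1 # cs)) ((W - {0}) \<times> {cs. set cs \<subseteq> K \<and> length cs = n})"
  proof (rule inj_onI)
    fix x y assume "x \<in> (W - {0}) \<times> {cs. set cs \<subseteq> K \<and> length cs = n}"
      and "(\<lambda>(w, cs). map ((*) w) (1 # cs)) x = (\<lambda>(w, cs). map ((*) w) (1 # cs)) y"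
    then show "x = y"
      by (cases x, cases y) simp
  qed
  then show ?thesis
    using assms by (simp add: scaled_monic_tuples_def card_image card_cartesian_product card_lists_length_eq)
qed

lemma scaled_monic_tuples_subset:
  assumes "K_subspace K V"
  shows "scaled_monic_tuples K V n \<subseteq> {a. set a \<subseteq> V \<and> length a = Suc n} - {replicate (Suc n) 0}"
  using assms unfolding scaled_monic_tuples_def K_subspace_def by auto (metis mult.commute subsetD)

lemma lin_comb_scaled_monic_tuple_nonzero:
  assumes K: "is_subfield K" and a: "a \<in> scaled_monic_tuples K W n" and es: "es \<in> indep_tuples K (Suc n)"
  shows "lin_comb a es \<noteq> 0"
proof -
  obtain w cs where a: "a = map ((*) w) (1 # cs)" and "w \<noteq> 0" and cs: "set cs \<subseteq> K" "length cs = n"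
    using a unfolding scaled_monic_tuples_def by auto
  have "lin_comb (1 # cs) es \<noteq> 0"
    using K_lin_indepD[of K es "1 # cs"] K cs es by (auto simp: indep_tuples_def is_subfield_def)
  with \<open>w \<noteq> 0\<close> show ?thesis
    using cs es by (simp add: a lin_comb_scale indep_tuples_def del: list.map)
qed

lemma scaled_ratio_le:
  fixes x b :: real
  assumes "1 \<le> x" "x ^ n < x ^ m" "b + (x ^ d - 1) * x ^ n + 1 \<le> x ^ (Suc n * r)"
  shows "b / (x ^ m - x ^ n)
    \<le> (x ^ (Suc n * r + 1) - (x ^ d - 1) * (x ^ Suc n - 1)) / (x ^ (m + 1) - x ^ Suc n)"
proof -
  have "1 \<le> x + x ^ d"
    using assms(1) one_le_power[OF assms(1), of d] by linarith
  have "x * b \<le> x * (x ^ (Suc n * r) - 1 - (x ^ d - 1) * x ^ n)"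
    using assms(1,3) by (intro mult_left_mono) auto
  also have "\<dots> \<le> x ^ (Suc n * r + 1) - (x ^ d - 1) * (x ^ Suc n - 1)"
    using \<open>1 \<le> x + x ^ d\<close> by (simp add: algebra_simps)
  finally have num: "x * b \<le> x ^ (Suc n * r + 1) - (x ^ d - 1) * (x ^ Suc n - 1)" .
  have "b / (x ^ m - x ^ n) = x * b / (x * (x ^ m - x ^ n))"
    using assms(1) by simp
  also have "\<dots> \<le> (x ^ (Suc n * r + 1) - (x ^ d - 1) * (x ^ Suc n - 1)) / (x * (x ^ m - x ^ n))"
    using num assms(1,2) by (intro divide_right_mono) auto
  also have "x * (x ^ m - x ^ n) = x ^ (m + 1) - x ^ Suc n"
    by (simp add: algebra_simps)
  finally show ?thesis .
qed

lemma card_coefficient_tuples_outside_scaled_monic: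
  fixes K :: "'a::{field,finite} set"
  assumes K: "is_subfield K" and V: "K_subspace K V" "V \<subseteq> K_span K gs"
    and vs: "set vs \<subseteq> V" "K_lin_indep K vs"
  shows "card ({as. set as \<subseteq> K_span K gs \<and> length as = Suc n} - {replicate (Suc n) 0}
           - scaled_monic_tuples K V n)
         + (card K ^ length vs - 1) * card K ^ n + 1 \<le> card K ^ (Suc n * length gs)"
proof -
  define L where "L = {as. set as \<subseteq> K_span K gs \<and> length as = Suc n}"
  define Z where "Z = scaled_monic_tuples K V n"
  define z :: "'a list" where "z = replicate (Suc n) 0"
  have "0 \<in> V"
    using V(1) by (simp add: K_subspace_def)
  have "card K ^ length vs \<le> card V"
    using card_K_span_indep[OF finite K vs(2)] K_span_subset_subspace[OF V(1) vs(1)]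
    by (metis card_mono finite)
  then have card_Z: "(card K ^ length vs - 1) * card K ^ n \<le> card Z"
    using \<open>0 \<in> V\<close> by (simp add: Z_def card_scaled_monic_tuples diff_le_mono)
  have Z_sub: "Z \<subseteq> L - {z}"
    using scaled_monic_tuples_subset[OF V(1)] V(2) unfolding Z_def L_def z_def by blast
  have "finite L"
    unfolding L_def by (rule finite_lists_length_eq) simp
  then have "card (L - {z} - Z) = card (L - {z}) - card Z" and "card Z \<le> card (L - {z})"
    using Z_sub by (simp_all add: card_Diff_subset card_mono finite_subset)
  moreover have "z \<in> L"
    using zero_in_K_span[OF K] unfolding L_def z_def by (simp add: set_replicate_conv_if)
  then have "Suc (card (L - {z})) = card L"
    using \<open>finite L\<close> by (rule card_Suc_Diff1[rotated])
  moreover have "card L \<le> card K ^ (Suc n * length gs)"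
  proof -
    have "card L = card (K_span K gs) ^ Suc n"
      unfolding L_def by (simp add: card_lists_length_eq)
    also have "\<dots> \<le> (card K ^ length gs) ^ Suc n"
      by (rule power_mono[OF card_K_span_le]) simp_all
    finally show ?thesis
      by (metis power_mult mult.commute)
  qed
  ultimately show ?thesis
    using card_Z unfolding L_def[symmetric] Z_def[symmetric] z_def[symmetric] by linarith
qed

theorem lemma1:
  fixes K :: "'a::{field,finite} set"
    and q m r d t :: nat
    and gs :: "'a list"
    and A :: "'a set"
  assumes q_pp: "\<exists>p k. prime p \<and> k > 0 \<and> q = p ^ k"
    and K_sub: "is_subfield K"
    and K_card: "card K = q"
    and F_card: "card (UNIV :: 'a set) = q ^ m"
    and r_def: "length gs = r"
    and r_pos: "0 < r" and r_le: "r \<le> m"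
    and A_sub: "A \<subseteq> K_span K gs"
    and A_lin: "\<exists>V. K_subspace K V \<and> V \<subseteq> A \<and> K_dim_ge K V d"
    and d_le: "d \<le> r"
    and t_ge: "1 \<le> t" and t_le: "t \<le> m"
  shows "real (card {es. length es = t \<and> K_lin_indep K es \<and>
                  (\<exists>as. length as = t \<and> set as \<subseteq> A \<and> as \<noteq> replicate t 0 \<and> lin_comb as es = 0)})
         / real (card {es :: 'a list. length es = t \<and> K_lin_indep K es})
       \<le> (real q ^ (t * r + 1) - (real q ^ d - 1) * (real q ^ t - 1)) / (real q ^ (m + 1) - real q ^ t)"
proof -
  let ?P = "{es. length es = t \<and> K_lin_indep K es \<and>
    (\<exists>as. length as = t \<and> set as \<subseteq> A \<and> as \<noteq> replicate t 0 \<and> lin_comb as es = 0)}"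
  obtain n where t: "t = Suc n"
    using t_ge by (cases t) auto
  obtain V vs where V: "K_subspace K V" "V \<subseteq> A"
    and vs: "length vs = d" "set vs \<subseteq> V" "K_lin_indep K vs"
    using A_lin unfolding K_dim_ge_def by blast
  define B where "B = {as. set as \<subseteq> K_span K gs \<and> length as = t} - {replicate t 0}
    - scaled_monic_tuples K V n"
  have "q \<ge> 2"
    using card_subfield_ge_2[OF K_sub] K_card by simp
  have "?P \<subseteq> {es \<in> indep_tuples K t. \<exists>a\<in>B. lin_comb a es = 0}"
    using lin_comb_scaled_monic_tuple_nonzero[OF K_sub] A_sub
    unfolding B_def t indep_tuples_def by blast
  then have "real (card ?P) / real (card {es :: 'a list. length es = t \<and> K_lin_indep K es})
    \<le> real (card {es \<in> indep_tuples K t. \<exists>a\<in>B. lin_comb a es = 0}) / real (card (indep_tuples K t))"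
    unfolding indep_tuples_def[symmetric]
    by (intro divide_right_mono of_nat_mono card_mono) (simp_all add: finite_indep_tuples)
  also have "\<dots> \<le> real (card B) / (real q ^ m - real q ^ n)"
    using ratio_annihilated_indep_tuples_le[OF K_sub, of m n B] F_card K_card t_le
    unfolding B_def t by auto
  also have "\<dots> \<le> (real q ^ (t * r + 1) - (real q ^ d - 1) * (real q ^ t - 1)) / (real q ^ (m + 1) - real q ^ t)"
    unfolding t
  proof (rule scaled_ratio_le)
    show "1 \<le> real q" "real q ^ n < real q ^ m"
      using \<open>q \<ge> 2\<close> t t_le by (simp_all add: power_strict_increasing)
    have "V \<subseteq> K_span K gs"
      using V(2) A_sub by blast
    from card_coefficient_tuples_outside_scaled_monic[OF K_sub V(1) this vs(2,3), of n]
    have "card B + (q ^ d - 1) * q ^ n + 1 \<le> q ^ (Suc n * r)"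
      unfolding K_card vs(1) r_def B_def t .
    then have "real (card B + (q ^ d - 1) * q ^ n + 1) \<le> real (q ^ (Suc n * r))"
      by (rule of_nat_mono)
    then show "real (card B) + (real q ^ d - 1) * real q ^ n + 1 \<le> real q ^ (Suc n * r)"
      using \<open>q \<ge> 2\<close> by simp
  qed
  finally show ?thesis .
qed

end
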